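(* For $s>0$ and $\kappa\ge1$, if $\theta_0\in[\phi(R)+\kappa\phi^{(s)},\frac\pi2)$, then $e^{\tilde{\mathfrak r}_0-\mathfrak r_0}=O\big(\varepsilon(\kappa,s)^{-1/\alpha}\big)$, with implicit constant depending only on $\alpha$.
   Context: Fixed constants $\nu>0$, $\alpha\in(\tfrac12,1]$; $R:=2\log(n/\nu)$, $n$ large. $\phi(r)\in[0,\pi/2]$ is defined for $r\in[0,R]$ by $\cos\phi(r)=\coth R\tanh(r/2)$ (decreasing bijection onto $[\phi(R),\pi/2]$). $\phi^{(s)}:=(s^{1/\alpha}/e^R)^{1/2}$, $\varepsilon(\kappa,s):=\frac{1+s}{(1+\kappa s^{1/(2\alpha)})^{2\alpha}}$. $\mathfrak r_0:=\phi^{-1}(\theta_0)$ and $\tilde{\mathfrak r}_0\in[\mathfrak r_0,R]$ is the unique value with $\frac{\log(\tanh(\alpha R/2)/\tanh(\alpha\tilde{\mathfrak r}_0/2))}{\log(\tanh(\alpha R/2)/\tanh(\alpha\mathfrak r_0/2))}=\varepsilon(\kappa,s)$. *)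

theory Defs
  imports Complex_Main
begin

definition radius :: "real \<Rightarrow> nat \<Rightarrow> real" where
  "radius \<nu> n = 2 * ln (real n / \<nu>)"

definition phi :: "real \<Rightarrow> real \<Rightarrow> real" where
  "phi R r = arccos ((cosh R / sinh R) * tanh (r / 2))"

definition phi_s :: "real \<Rightarrow> real \<Rightarrow> real \<Rightarrow> real" where
  "phi_s \<alpha> R s = sqrt (s powr (1 / \<alpha>) / exp R)"

definition eps :: "real \<Rightarrow> real \<Rightarrow> real \<Rightarrow> real" where
  "eps \<alpha> \<kappa> s = (1 + s) / (1 + \<kappa> * s powr (1 / (2 * \<alpha>))) powr (2 * \<alpha>)"

definition logratio :: "real \<Rightarrow> real \<Rightarrow> real \<Rightarrow> real" where
  "logratio \<alpha> R r = ln (tanh (\<alpha> * R / 2) / tanh (\<alpha> * r / 2))"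

end

theory Submission imports Defs begin

text \<open>
  In the variable \<open>x = exp (-\<alpha> r)\<close> one has \<open>logratio \<alpha> R r = 2 (artanh x - artanh y)\<close> with
  \<open>y = exp (-\<alpha> R)\<close>. Since \<open>artanh\<close> is convex with \<open>artanh 0 = 0\<close>, the slope
  \<open>(artanh x - artanh y) / x\<close> grows with \<open>x\<close>; comparing it at \<open>x\<^sub>t = exp (-\<alpha> r\<^sub>t)\<close> and
  \<open>x\<^sub>0 = exp (-\<alpha> r\<^sub>0)\<close> gives \<open>\<epsilon> \<le> x\<^sub>t / x\<^sub>0 = exp (-\<alpha> (r\<^sub>t - r\<^sub>0))\<close>, i.e. the claim with
  constant 1.
\<close>

lemma artanh_mono_real:
  fixes a b :: real assumes "-1 < a" "a \<le> b" "b < 1"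
  shows "artanh a \<le> artanh b"
proof -
  have "(1 + a) / (1 - a) \<le> (1 + b) / (1 - b)"
    using assms by (simp add: divide_simps) (simp add: algebra_simps)
  moreover have "0 < (1 + a) / (1 - a)" using assms by simp
  ultimately show ?thesis by (simp add: artanh_def)
qed

lemma artanh_le_div:
  fixes x :: real assumes "0 \<le> x" "x < 1"
  shows "artanh x \<le> x / (1 - x\<^sup>2)"
proof -
  let ?f = "\<lambda>t::real. t / (1 - t\<^sup>2) - artanh t"
  have "?f 0 \<le> ?f x"
  proof (rule DERIV_nonneg_imp_nondecreasing[OF assms(1)])
    fix t :: real assume t: "0 \<le> t" "t \<le> x"
    have sq: "t\<^sup>2 < 1" using t assms by (simp add: power_less_one_iff abs_square_less_1)
    have "(?f has_real_derivative ((1 - t\<^sup>2) + 2 * t * t) / (1 - t\<^sup>2)\<^sup>2 - 1 / (1 - t\<^sup>2)) (at t)"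
      using t assms sq by (auto intro!: derivative_eq_intros simp: power2_eq_square)
    moreover have "1 / (1 - t\<^sup>2) \<le> ((1 - t\<^sup>2) + 2 * t * t) / (1 - t\<^sup>2)\<^sup>2"
    proof -
      have "1 / (1 - t\<^sup>2) = (1 - t\<^sup>2) / (1 - t\<^sup>2)\<^sup>2" using sq by (simp add: power2_eq_square)
      also have "\<dots> \<le> ((1 - t\<^sup>2) + 2 * t * t) / (1 - t\<^sup>2)\<^sup>2" by (intro divide_right_mono) auto
      finally show ?thesis .
    qed
    ultimately show "\<exists>y. DERIV ?f t :> y \<and> 0 \<le> y" by auto
  qed
  thus ?thesis by simp
qed

lemma artanh_diff_div_mono:
  fixes a b c :: real assumes "0 \<le> c" "0 < a" "a \<le> b" "b < 1"
  shows "(artanh a - c) / a \<le> (artanh b - c) / b"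
proof (rule DERIV_nonneg_imp_nondecreasing[OF assms(3)])
  fix t :: real assume t: "a \<le> t" "t \<le> b"
  have t0: "0 < t" "t < 1" using t assms by auto
  have sq: "t\<^sup>2 < 1" using t0 by (simp add: abs_square_less_1)
  have "((\<lambda>t. (artanh t - c) / t) has_real_derivative
          (1 / (1 - t\<^sup>2) * t - (artanh t - c)) / t\<^sup>2) (at t)"
    using t0 sq by (auto intro!: derivative_eq_intros simp: power2_eq_square)
  moreover have "1 / (1 - t\<^sup>2) * t - (artanh t - c) \<ge> 0"
    using artanh_le_div[of t] t0 assms(1) by simp
  ultimately show "\<exists>y. ((\<lambda>t. (artanh t - c) / t) has_real_derivative y) (at t) \<and> 0 \<le> y"
    by auto
qed

lemma ln_tanh_half:
  fixes z :: real assumes "0 < z"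
  shows "ln (tanh (z / 2)) = - 2 * artanh (exp (- z))"
proof -
  define q where "q = (1 + exp (- z)) / (1 - exp (- z))"
  have "0 < q" unfolding q_def using assms by (simp add: add_pos_pos)
  have "tanh (z / 2) = inverse q"
    unfolding q_def by (simp add: tanh_real_altdef)
  then have "ln (tanh (z / 2)) = - ln q" using \<open>0 < q\<close> by (simp add: ln_inverse)
  then show ?thesis unfolding q_def artanh_def by simp
qed

lemma logratio_artanh:
  fixes \<alpha> R r :: real assumes "0 < \<alpha>" "0 < r" "r \<le> R"
  shows "logratio \<alpha> R r = 2 * (artanh (exp (- (\<alpha> * r))) - artanh (exp (- (\<alpha> * R))))"
proof -
  have pos: "0 < \<alpha> * r" "0 < \<alpha> * R" using assms by auto
  hence "tanh (\<alpha> * r / 2) \<noteq> 0" "tanh (\<alpha> * R / 2) \<noteq> 0" by auto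
  hence "logratio \<alpha> R r = ln (tanh (\<alpha> * R / 2)) - ln (tanh (\<alpha> * r / 2))"
    unfolding logratio_def by (simp add: ln_div)
  with pos show ?thesis using ln_tanh_half[of "\<alpha> * r"] ln_tanh_half[of "\<alpha> * R"] by auto
qed

lemma logratio_quotient_le:
  fixes \<alpha> R r\<^sub>0 r\<^sub>t :: real assumes "0 < \<alpha>" "0 \<le> r\<^sub>0" "r\<^sub>0 \<le> r\<^sub>t" "r\<^sub>t \<le> R"
  shows "logratio \<alpha> R r\<^sub>t / logratio \<alpha> R r\<^sub>0 \<le> exp (- (\<alpha> * (r\<^sub>t - r\<^sub>0)))"
proof (cases "r\<^sub>0 = 0")
  case True
  then show ?thesis by (simp add: logratio_def)
next
  case False
  define x\<^sub>0 x\<^sub>t y where "x\<^sub>0 = exp (- (\<alpha> * r\<^sub>0))" and "x\<^sub>t = exp (- (\<alpha> * r\<^sub>t))"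
    and "y = exp (- (\<alpha> * R))"
  define c where "c = artanh y"
  have r0: "0 < r\<^sub>0" using False assms by simp
  have x: "0 < x\<^sub>t" "x\<^sub>t \<le> x\<^sub>0" "x\<^sub>0 < 1" "0 \<le> y" "y \<le> x\<^sub>0" "0 < x\<^sub>0"
    unfolding x\<^sub>0_def x\<^sub>t_def y_def using assms r0 by (auto simp: mult_left_mono)
  have c: "0 \<le> c" unfolding c_def using artanh_mono_real[of 0 y] x by simp
  have L0: "logratio \<alpha> R r\<^sub>0 = 2 * (artanh x\<^sub>0 - c)" and Lt: "logratio \<alpha> R r\<^sub>t = 2 * (artanh x\<^sub>t - c)"
    unfolding x\<^sub>0_def x\<^sub>t_def c_def y_def using logratio_artanh assms r0 by auto
  have slope: "(artanh x\<^sub>t - c) * x\<^sub>0 \<le> (artanh x\<^sub>0 - c) * x\<^sub>t"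
    using artanh_diff_div_mono[OF c x(1,2,3)] x by (simp add: divide_simps)
  have "logratio \<alpha> R r\<^sub>t / logratio \<alpha> R r\<^sub>0 = (artanh x\<^sub>t - c) / (artanh x\<^sub>0 - c)"
    unfolding L0 Lt by (rule mult_divide_mult_cancel_left) simp
  also have "\<dots> \<le> x\<^sub>t / x\<^sub>0"
  proof (cases "artanh x\<^sub>0 - c = 0")
    case False
    moreover have "artanh x\<^sub>0 - c \<ge> 0"
      unfolding c_def using artanh_mono_real[of y x\<^sub>0] x by simp
    ultimately show ?thesis using slope x by (simp add: divide_simps mult.commute)
  qed (use x in \<open>simp add: divide_nonneg_pos less_imp_le\<close>)
  also have "x\<^sub>t / x\<^sub>0 = exp (- (\<alpha> * (r\<^sub>t - r\<^sub>0)))"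
    unfolding x\<^sub>t_def x\<^sub>0_def by (simp add: exp_diff[symmetric] algebra_simps)
  finally show ?thesis .
qed

lemma eps_pos:
  fixes \<alpha> \<kappa> s :: real assumes "0 < s" "0 \<le> \<kappa>"
  shows "0 < eps \<alpha> \<kappa> s"
proof -
  have "0 < 1 + \<kappa> * s powr (1 / (2 * \<alpha>))" using assms by (simp add: add_pos_nonneg)
  then show ?thesis unfolding eps_def using assms by simp
qed

lemma exp_le_powr_of_le_exp:
  fixes \<alpha> d e :: real assumes "0 < \<alpha>" "0 < e" "e \<le> exp (- (\<alpha> * d))"
  shows "exp d \<le> e powr (- 1 / \<alpha>)"
proof -
  have "exp d = exp (- (\<alpha> * d)) powr (- 1 / \<alpha>)"
    using assms(1) by (simp add: exp_powr_real)
  also have "\<dots> \<le> e powr (- 1 / \<alpha>)"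
    using assms by (intro powr_mono2') auto
  finally show ?thesis .
qed

theorem mainTheorem9:
  fixes \<alpha> :: real
  assumes "1 / 2 < \<alpha>" and "\<alpha> \<le> 1"
  shows "\<exists>C>0. \<forall>\<nu>>0. \<exists>N::nat. \<forall>n\<ge>N. \<forall>s \<kappa> \<theta>\<^sub>0 r\<^sub>0 rt.
    s > 0 \<longrightarrow> \<kappa> \<ge> 1 \<longrightarrow>
    \<theta>\<^sub>0 \<in> {phi (radius \<nu> n) (radius \<nu> n) + \<kappa> * phi_s \<alpha> (radius \<nu> n) s ..< pi / 2} \<longrightarrow>
    r\<^sub>0 \<in> {0 .. radius \<nu> n} \<longrightarrow> phi (radius \<nu> n) r\<^sub>0 = \<theta>\<^sub>0 \<longrightarrow>
    rt \<in> {r\<^sub>0 .. radius \<nu> n} \<longrightarrow>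
    logratio \<alpha> (radius \<nu> n) rt / logratio \<alpha> (radius \<nu> n) r\<^sub>0 = eps \<alpha> \<kappa> s \<longrightarrow>
    exp (rt - r\<^sub>0) \<le> C * eps \<alpha> \<kappa> s powr (- 1 / \<alpha>)"
proof (intro exI[of _ 1] conjI allI impI)
  fix \<nu> :: real and n :: nat and s \<kappa> \<theta>\<^sub>0 r\<^sub>0 rt :: real
  assume "0 < s" "1 \<le> \<kappa>" "r\<^sub>0 \<in> {0 .. radius \<nu> n}" "rt \<in> {r\<^sub>0 .. radius \<nu> n}"
    and quotient: "logratio \<alpha> (radius \<nu> n) rt / logratio \<alpha> (radius \<nu> n) r\<^sub>0 = eps \<alpha> \<kappa> s"
  have "0 < \<alpha>" using assms by simp
  moreover have "0 < eps \<alpha> \<kappa> s" using eps_pos \<open>0 < s\<close> \<open>1 \<le> \<kappa>\<close> by simp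
  moreover have "eps \<alpha> \<kappa> s \<le> exp (- (\<alpha> * (rt - r\<^sub>0)))"
    unfolding quotient[symmetric] using \<open>0 < \<alpha>\<close> \<open>r\<^sub>0 \<in> _\<close> \<open>rt \<in> _\<close>
    by (intro logratio_quotient_le) auto
  ultimately show "exp (rt - r\<^sub>0) \<le> 1 * eps \<alpha> \<kappa> s powr (- 1 / \<alpha>)"
    using exp_le_powr_of_le_exp by simp
qed simp

end
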